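(* Each of the graphs $K_{3,3,3}$, $K_{2,4,4}$, $K_{2,3,5}$, $K_{2,2,9}$, $K_{1,2,2,2}$, $K_{1,1,2,3}$, $K_{1,1,1,2,2}$, $K_{1*4,6}$, $K_{1*5,5}$ and $K_{1*6,4}$ is uniquely $3$-list colorable.
   Context: All graphs are finite, simple and undirected. A list assignment $L$ for a graph $G$ assigns to each vertex $v$ a set $L(v)$ of colors; an $L$-coloring is a proper vertex coloring $c$ of $G$ with $c(v)\in L(v)$ for every vertex $v$. A $k$-list assignment is a list assignment with $|L(v)|=k$ for all $v$. $G$ is uniquely $k$-list colorable (U$k$LC) if there exists a $k$-list assignment $L$ such that $G$ has exactly one $L$-coloring. $K_{n_1,\dots,n_r}$ denotes the complete $r$-partite graph with parts of sizes $n_1,\dots,n_r$. $K_{1*r,s}$ denotes the complete $(r+1)$-partite graph with $r$ parts of size $1$ and one part of size $s$. *)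

theory Defs
  imports Main "HOL-Library.FuncSet"
begin

(* A graph is given by a vertex set V and a symmetric irreflexive edge relation E. *)

definition L_coloring :: "'a set \<Rightarrow> ('a \<Rightarrow> 'a \<Rightarrow> bool) \<Rightarrow> ('a \<Rightarrow> nat set) \<Rightarrow> ('a \<Rightarrow> nat) \<Rightarrow> bool" where
  "L_coloring V E L c \<longleftrightarrow>
     (\<forall>v\<in>V. c v \<in> L v) \<and> (\<forall>u\<in>V. \<forall>v\<in>V. E u v \<longrightarrow> c u \<noteq> c v)"

(* G = (V,E) is uniquely k-list colorable: some k-list assignment admits exactly one
   L-coloring (colorings identified with their restriction to V). *)
definition uniquely_k_list_colorable :: "'a set \<Rightarrow> ('a \<Rightarrow> 'a \<Rightarrow> bool) \<Rightarrow> nat \<Rightarrow> bool" where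
  "uniquely_k_list_colorable V E k \<longleftrightarrow>
     (\<exists>L. (\<forall>v\<in>V. finite (L v) \<and> card (L v) = k) \<and>
          (\<exists>!c. c \<in> extensional V \<and> L_coloring V E L c))"

(* Complete multipartite graph K_{n_1,...,n_r}, ns = [n_1,...,n_r]:
   vertex (i,j) is the j-th vertex of part i. *)
definition cmp_verts :: "nat list \<Rightarrow> (nat \<times> nat) set" where
  "cmp_verts ns = {(i, j). i < length ns \<and> j < ns ! i}"

definition cmp_edge :: "nat \<times> nat \<Rightarrow> nat \<times> nat \<Rightarrow> bool" where
  "cmp_edge u v \<longleftrightarrow> fst u \<noteq> fst v"

definition UkLC_complete_multipartite :: "nat list \<Rightarrow> nat \<Rightarrow> bool" where
  "UkLC_complete_multipartite ns k \<longleftrightarrow> uniquely_k_list_colorable (cmp_verts ns) cmp_edge k"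

definition K_1r_s :: "nat \<Rightarrow> nat \<Rightarrow> nat list" where
  "K_1r_s r s = replicate r 1 @ [s]"

end

theory Submission
  imports Defs
begin

(* For each of the ten graphs we exhibit an explicit 3-list assignment.  That it admits exactly
   one coloring is verified by an exhaustive backtracking search over the vertices: the search is
   proved once and for all to return exactly the proper list colorings, so a single search result
   means a unique coloring. *)

fun list_colorings :: "('a \<Rightarrow> 'a \<Rightarrow> bool) \<Rightarrow> ('a \<Rightarrow> nat list) \<Rightarrow> ('a \<times> nat) list \<Rightarrow> 'a list
    \<Rightarrow> ('a \<times> nat) list list" where
  "list_colorings E L acc [] = [acc]"
| "list_colorings E L acc (v # vs) =
     concat (map (\<lambda>x. list_colorings E L ((v, x) # acc) vs)
       (filter (\<lambda>x. \<forall>(u, y) \<in> set acc. E u v \<longrightarrow> y \<noteq> x) (L v)))"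

definition proper_assoc :: "('a \<Rightarrow> 'a \<Rightarrow> bool) \<Rightarrow> ('a \<times> nat) list \<Rightarrow> bool" where
  "proper_assoc E r \<longleftrightarrow> (\<forall>(u, x) \<in> set r. \<forall>(v, y) \<in> set r. E u v \<longrightarrow> x \<noteq> y)"

definition within_lists :: "('a \<Rightarrow> nat list) \<Rightarrow> ('a \<times> nat) list \<Rightarrow> bool" where
  "within_lists L r \<longleftrightarrow> (\<forall>(v, x) \<in> set r. x \<in> set (L v))"

lemma proper_assocD:
  "proper_assoc E r \<Longrightarrow> (u, x) \<in> set r \<Longrightarrow> (v, y) \<in> set r \<Longrightarrow> E u v \<Longrightarrow> x \<noteq> y"
  unfolding proper_assoc_def by fast

lemma within_listsD: "within_lists L r \<Longrightarrow> (v, x) \<in> set r \<Longrightarrow> x \<in> set (L v)"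
  unfolding within_lists_def by fast

lemma proper_assoc_Cons:
  assumes "symp E" "irreflp E"
  shows "proper_assoc E ((v, x) # r) \<longleftrightarrow>
           proper_assoc E r \<and> (\<forall>(u, y) \<in> set r. E u v \<longrightarrow> y \<noteq> x)"
  using assms unfolding proper_assoc_def by (auto dest: sympD simp: irreflp_def)

lemma list_colorings_sound:
  assumes "symp E" "irreflp E" "r \<in> set (list_colorings E L acc vs)"
    and "proper_assoc E acc" "within_lists L acc"
  shows "proper_assoc E r \<and> within_lists L r \<and> map fst r = rev vs @ map fst acc"
  using assms(3-)
proof (induction vs arbitrary: acc)
  case Nil
  then show ?case by simp
next
  case (Cons v vs)
  then obtain x where x: "x \<in> set (L v)" "\<forall>(u, y) \<in> set acc. E u v \<longrightarrow> y \<noteq> x"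
    and r: "r \<in> set (list_colorings E L ((v, x) # acc) vs)"
    by auto
  have "proper_assoc E ((v, x) # acc)"
    using Cons.prems(2) x(2) proper_assoc_Cons[OF assms(1,2)] by blast
  moreover have "within_lists L ((v, x) # acc)"
    using Cons.prems(3) x(1) by (simp add: within_lists_def)
  ultimately show ?case using Cons.IH[OF r] by simp
qed

lemma list_colorings_complete:
  assumes "\<forall>v \<in> set vs. c v \<in> set (L v)"
    and "\<forall>u \<in> set us \<union> set vs. \<forall>v \<in> set vs. E u v \<longrightarrow> c u \<noteq> c v"
  shows "map (\<lambda>v. (v, c v)) (rev vs @ us)
           \<in> set (list_colorings E L (map (\<lambda>v. (v, c v)) us) vs)"
  using assms
proof (induction vs arbitrary: us)
  case Nil
  then show ?case by simp
next
  case (Cons v vs)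
  have "\<forall>u \<in> set us. E u v \<longrightarrow> c u \<noteq> c v"
    using Cons.prems(2) by simp
  then have admissible: "\<forall>(u, y) \<in> set (map (\<lambda>v. (v, c v)) us). E u v \<longrightarrow> y \<noteq> c v"
    by auto
  have "map (\<lambda>v. (v, c v)) (rev vs @ v # us)
          \<in> set (list_colorings E L (map (\<lambda>v. (v, c v)) (v # us)) vs)"
    using Cons.prems by (intro Cons.IH) auto
  then show ?case using Cons.prems(1) admissible by auto
qed

lemma L_coloring_restrict: "L_coloring V E L (restrict c V) \<longleftrightarrow> L_coloring V E L c"
  by (simp add: L_coloring_def)

lemma L_coloring_map_of:
  assumes "proper_assoc E r" "within_lists L r" "V \<subseteq> fst ` set r"
  shows "L_coloring V E (set \<circ> L) (\<lambda>v. the (map_of r v))"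
proof -
  have in_r: "(v, the (map_of r v)) \<in> set r" if "v \<in> V" for v
  proof -
    have "v \<in> fst ` set r" using assms(3) that by blast
    then obtain x where "map_of r v = Some x" by (meson map_of_eq_None_iff not_Some_eq)
    then show ?thesis by (simp add: map_of_SomeD)
  qed
  show ?thesis
    unfolding L_coloring_def
  proof (intro conjI ballI impI)
    show "the (map_of r v) \<in> (set \<circ> L) v" if "v \<in> V" for v
      using within_listsD[OF assms(2) in_r[OF that]] by simp
    show "the (map_of r u) \<noteq> the (map_of r v)" if "u \<in> V" "v \<in> V" "E u v" for u v
      using proper_assocD[OF assms(1) in_r[OF that(1)] in_r[OF that(2)] that(3)] .
  qed
qed

lemma uniquely_k_list_colorable_by_search:
  assumes "symp E" "irreflp E"
    and lists: "\<forall>v \<in> set vs. distinct (L v) \<and> length (L v) = k"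
    and single: "length (list_colorings E L [] vs) = 1"
  shows "uniquely_k_list_colorable (set vs) E k"
proof -
  from single obtain r where r: "list_colorings E L [] vs = [r]"
    by (auto simp: length_Suc_conv)
  have sound: "proper_assoc E r" "within_lists L r" "map fst r = rev vs"
    using list_colorings_sound[OF assms(1,2), of r L "[]" vs] r
    by (simp_all add: proper_assoc_def within_lists_def)
  define c0 where "c0 = restrict (\<lambda>v. the (map_of r v)) (set vs)"
  have "set vs \<subseteq> fst ` set r"
    using arg_cong[OF sound(3), of set] by simp
  then have c0_coloring: "L_coloring (set vs) E (set \<circ> L) c0"
    unfolding c0_def L_coloring_restrict by (rule L_coloring_map_of[OF sound(1,2)])
  have search_result: "rev (map (\<lambda>v. (v, c v)) vs) = r" if "L_coloring (set vs) E (set \<circ> L) c"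
    for c
  proof -
    have "rev (map (\<lambda>v. (v, c v)) vs) \<in> set (list_colorings E L [] vs)"
      using list_colorings_complete[of vs c L "[]" E] that by (simp add: L_coloring_def rev_map)
    then show ?thesis using r by simp
  qed
  have c0_unique: "c = c0" if ext: "c \<in> extensional (set vs)"
    and coloring: "L_coloring (set vs) E (set \<circ> L) c" for c
  proof (rule extensionalityI[OF ext])
    show "c0 \<in> extensional (set vs)" by (simp add: c0_def)
    have "map (\<lambda>v. (v, c v)) vs = map (\<lambda>v. (v, c0 v)) vs"
      using search_result[OF coloring] search_result[OF c0_coloring] rev_is_rev_conv by metis
    then show "c v = c0 v" if "v \<in> set vs" for v
      using that by (simp add: map_eq_conv)
  qed
  have "\<forall>v \<in> set vs. finite ((set \<circ> L) v) \<and> card ((set \<circ> L) v) = k"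
    using lists by (simp add: distinct_card)
  moreover have "\<exists>!c. c \<in> extensional (set vs) \<and> L_coloring (set vs) E (set \<circ> L) c"
    using c0_coloring c0_unique by (intro ex1I[of _ c0]) (auto simp: c0_def)
  ultimately show ?thesis
    unfolding uniquely_k_list_colorable_def by (intro exI[of _ "set \<circ> L"] conjI)
qed

definition cmp_vertex_list :: "nat list \<Rightarrow> (nat \<times> nat) list" where
  "cmp_vertex_list ns = concat (map (\<lambda>i. map (Pair i) [0..<ns ! i]) [0..<length ns])"

lemma set_cmp_vertex_list: "set (cmp_vertex_list ns) = cmp_verts ns"
  by (auto simp: cmp_verts_def cmp_vertex_list_def)

lemma symp_cmp_edge: "symp cmp_edge"
  by (auto intro: sympI simp: cmp_edge_def)

lemma irreflp_cmp_edge: "irreflp cmp_edge"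
  by (auto intro: irreflpI simp: cmp_edge_def)

lemma UkLC_complete_multipartite_by_search:
  assumes "\<forall>v \<in> set (cmp_vertex_list ns). distinct (L v) \<and> length (L v) = k"
    and "length (list_colorings cmp_edge L [] (cmp_vertex_list ns)) = 1"
  shows "UkLC_complete_multipartite ns k"
  using uniquely_k_list_colorable_by_search[OF symp_cmp_edge irreflp_cmp_edge assms]
  unfolding UkLC_complete_multipartite_def set_cmp_vertex_list .

lemma UkLC_K_3_3_3: "UkLC_complete_multipartite [3, 3, 3] 3"
  by (rule UkLC_complete_multipartite_by_search[where L =
    "\<lambda>(i, j). [[[1, 3, 5], [0, 4, 5], [0, 1, 2]], [[0, 1, 5], [0, 2, 5], [1, 2, 3]], [[1, 4, 5], [0, 1, 2], [0, 3, 5]]] ! i ! j"]; code_simp)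

lemma UkLC_K_2_4_4: "UkLC_complete_multipartite [2, 4, 4] 3"
  by (rule UkLC_complete_multipartite_by_search[where L =
    "\<lambda>(i, j). [[[0, 2, 4], [1, 3, 5]], [[0, 4, 5], [0, 1, 2], [1, 2, 4], [0, 2, 3]], [[2, 4, 5], [0, 4, 5], [0, 3, 4], [0, 1, 2]]] ! i ! j"]; code_simp)

lemma UkLC_K_2_3_5: "UkLC_complete_multipartite [2, 3, 5] 3"
  by (rule UkLC_complete_multipartite_by_search[where L =
    "\<lambda>(i, j). [[[2, 3, 4], [0, 1, 5]], [[0, 2, 5], [0, 1, 5], [1, 2, 3]], [[0, 4, 5], [2, 3, 5], [0, 1, 3], [1, 2, 4], [0, 1, 5]]] ! i ! j"]; code_simp)

lemma UkLC_K_2_2_9: "UkLC_complete_multipartite [2, 2, 9] 3"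
  by (rule UkLC_complete_multipartite_by_search[where L =
    "\<lambda>(i, j). [[[1, 3, 4], [0, 2, 4]], [[1, 2, 5], [0, 3, 4]], [[2, 3, 4], [0, 2, 4], [1, 3, 4], [0, 4, 5], [0, 1, 2], [3, 4, 5], [0, 2, 5], [0, 1, 4], [1, 3, 5]]] ! i ! j"]; code_simp)

lemma UkLC_K_1_2_2_2: "UkLC_complete_multipartite [1, 2, 2, 2] 3"
  by (rule UkLC_complete_multipartite_by_search[where L =
    "\<lambda>(i, j). [[[0, 2, 3]], [[1, 2, 3], [2, 3, 4]], [[0, 2, 3], [1, 2, 4]], [[0, 2, 3], [2, 3, 4]]] ! i ! j"]; code_simp)

lemma UkLC_K_1_1_2_3: "UkLC_complete_multipartite [1, 1, 2, 3] 3"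
  by (rule UkLC_complete_multipartite_by_search[where L =
    "\<lambda>(i, j). [[[0, 1, 3]], [[1, 2, 3]], [[1, 2, 3], [0, 1, 3]], [[0, 1, 3], [0, 1, 2], [1, 2, 3]]] ! i ! j"]; code_simp)

lemma UkLC_K_1_1_1_2_2: "UkLC_complete_multipartite [1, 1, 1, 2, 2] 3"
  by (rule UkLC_complete_multipartite_by_search[where L =
    "\<lambda>(i, j). [[[0, 2, 4]], [[2, 3, 4]], [[0, 1, 2]], [[0, 1, 4], [2, 3, 4]], [[0, 2, 4], [1, 2, 4]]] ! i ! j"]; code_simp)

lemma UkLC_K_1x4_6: "UkLC_complete_multipartite (K_1r_s 4 6) 3"
  unfolding K_1r_s_def by (rule UkLC_complete_multipartite_by_search[where L =
    "\<lambda>(i, j). [[[1, 3, 4]], [[2, 4, 5]], [[0, 4, 5]], [[0, 3, 4]], [[0, 3, 5], [2, 4, 5], [1, 4, 5], [0, 2, 4], [1, 2, 3], [0, 1, 3]]] ! i ! j"]; code_simp)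

lemma UkLC_K_1x5_5: "UkLC_complete_multipartite (K_1r_s 5 5) 3"
  unfolding K_1r_s_def by (rule UkLC_complete_multipartite_by_search[where L =
    "\<lambda>(i, j). [[[0, 1, 5]], [[2, 3, 6]], [[3, 4, 6]], [[0, 1, 4]], [[0, 1, 6]], [[0, 4, 5], [1, 2, 3], [3, 5, 6], [4, 5, 6], [0, 1, 6]]] ! i ! j"]; code_simp)

lemma UkLC_K_1x6_4: "UkLC_complete_multipartite (K_1r_s 6 4) 3"
  unfolding K_1r_s_def by (rule UkLC_complete_multipartite_by_search[where L =
    "\<lambda>(i, j). [[[5, 6, 7]], [[1, 4, 5]], [[0, 2, 6]], [[0, 4, 5]], [[0, 2, 4]], [[3, 4, 5]], [[1, 2, 6], [4, 5, 7], [0, 1, 3], [0, 3, 5]]] ! i ! j"]; code_simp)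

theorem proposition3p3:
  shows "\<forall>ns \<in> {[3,3,3], [2,4,4], [2,3,5], [2,2,9], [1,2,2,2], [1,1,2,3], [1,1,1,2,2],
                 K_1r_s 4 6, K_1r_s 5 5, K_1r_s 6 4}.
           UkLC_complete_multipartite ns 3"
  using UkLC_K_3_3_3 UkLC_K_2_4_4 UkLC_K_2_3_5 UkLC_K_2_2_9 UkLC_K_1_2_2_2 UkLC_K_1_1_2_3
    UkLC_K_1_1_1_2_2 UkLC_K_1x4_6 UkLC_K_1x5_5 UkLC_K_1x6_4
  by simp

end
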